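(* Let $n\geq 1$ and let $c$ be the center of the star $K_{1,n}$ (the vertex of degree $n$; either vertex if $n=1$). Then $\uparrow^{2}K_{1,n}$ has Laplacian perfect state transfer between the vertices $(0,c)$ and $(1,c)$ (which have degree $2n$) if and only if $n$ is odd.
   Context: All graphs are simple, undirected and unweighted. $K_{1,n}$ is the star with one center adjacent to $n$ leaves. The blow-up $\uparrow^{2}G$ has vertex set $\mathbb{Z}_2\times V(G)$, with $(l,a)\sim(m,b)$ iff $a\sim b$ in $G$. A graph with Laplacian $L=D-A$ has Laplacian perfect state transfer between $a,b$ if $\exp(i\tau L)\mathbf{e}_a=\gamma\mathbf{e}_b$ for some $\tau>0$, $\gamma\in\mathbb{C}$. *)

theory Defs
  imports Complex_Main
begin

(* A finite simple graph is given by a vertex set V and a symmetric irreflexive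
   adjacency relation E (only its restriction to V matters).
   Matrices indexed by V are functions 'v => 'v => complex. *)

definition mat_mult :: "'v set \<Rightarrow> ('v \<Rightarrow> 'v \<Rightarrow> complex) \<Rightarrow> ('v \<Rightarrow> 'v \<Rightarrow> complex) \<Rightarrow> 'v \<Rightarrow> 'v \<Rightarrow> complex" where
  "mat_mult V A B = (\<lambda>u v. \<Sum>w\<in>V. A u w * B w v)"

definition mat_id :: "'v \<Rightarrow> 'v \<Rightarrow> complex" where
  "mat_id = (\<lambda>u v. if u = v then 1 else 0)"

fun mat_pow :: "'v set \<Rightarrow> ('v \<Rightarrow> 'v \<Rightarrow> complex) \<Rightarrow> nat \<Rightarrow> 'v \<Rightarrow> 'v \<Rightarrow> complex" where
  "mat_pow V A 0 = mat_id"
| "mat_pow V A (Suc k) = mat_mult V A (mat_pow V A k)"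

definition mat_exp :: "'v set \<Rightarrow> ('v \<Rightarrow> 'v \<Rightarrow> complex) \<Rightarrow> 'v \<Rightarrow> 'v \<Rightarrow> complex" where
  "mat_exp V A = (\<lambda>u v. \<Sum>k. mat_pow V A k u v / of_nat (fact k))"

definition degree :: "'v set \<Rightarrow> ('v \<Rightarrow> 'v \<Rightarrow> bool) \<Rightarrow> 'v \<Rightarrow> nat" where
  "degree V E u = card {w\<in>V. E u w}"

definition laplacian :: "'v set \<Rightarrow> ('v \<Rightarrow> 'v \<Rightarrow> bool) \<Rightarrow> 'v \<Rightarrow> 'v \<Rightarrow> complex" where
  "laplacian V E = (\<lambda>u v. (if u = v then of_nat (degree V E u) else 0) - (if E u v then 1 else 0))"

definition lap_pst :: "'v set \<Rightarrow> ('v \<Rightarrow> 'v \<Rightarrow> bool) \<Rightarrow> 'v \<Rightarrow> 'v \<Rightarrow> bool" where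
  "lap_pst V E a b \<longleftrightarrow>
     (\<exists>\<tau>::real. \<tau> > 0 \<and> (\<exists>\<gamma>::complex. \<forall>u\<in>V.
        mat_exp V (\<lambda>x y. \<i> * of_real \<tau> * laplacian V E x y) u a = \<gamma> * (if u = b then 1 else 0)))"

(* star K_{1,n}: vertices 0..n, center 0, leaves 1..n *)
definition star_verts :: "nat \<Rightarrow> nat set" where
  "star_verts n = {0..n}"

definition star_adj :: "nat \<Rightarrow> nat \<Rightarrow> nat \<Rightarrow> bool" where
  "star_adj n a b \<longleftrightarrow> a \<le> n \<and> b \<le> n \<and> ((a = 0 \<and> b \<noteq> 0) \<or> (b = 0 \<and> a \<noteq> 0))"

definition blowup2_verts :: "'v set \<Rightarrow> (nat \<times> 'v) set" where
  "blowup2_verts V = {0, 1} \<times> V"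

definition blowup2_adj :: "('v \<Rightarrow> 'v \<Rightarrow> bool) \<Rightarrow> nat \<times> 'v \<Rightarrow> nat \<times> 'v \<Rightarrow> bool" where
  "blowup2_adj E x y \<longleftrightarrow> E (snd x) (snd y)"

end

theory Submission
  imports Defs
begin

(* The unit vector at (0,0) is a combination of three Laplacian eigenvectors of the blow-up:
   e_(0,0) = 1/2 (e_(0,0) - e_(1,0)) + 1/(2(n+1)) (1 + v), where e_(0,0) - e_(1,0) has eigenvalue 2n,
   the all-ones vector 1 has eigenvalue 0, and v (equal to n at both copies of the centre and to -1
   at every leaf) has eigenvalue 2n+2. Hence exp(i tau L) e_(0,0) is explicit, and it is a multiple
   of e_(1,0) exactly when exp(2n i tau) = -1 and exp((2n+2) i tau) = 1. Writing 2n tau = (2m-1) pi and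
   (2n+2) tau = 2k pi gives 2nk = (n+1)(2m-1), which forces n to be odd; conversely tau = pi/2 works
   for odd n. *)

lemma exp_series_sums: "(\<lambda>k. w ^ k / of_nat (fact k)) sums (exp w :: complex)"
  using exp_converges[of w] by (simp add: scaleR_conv_of_real divide_inverse mult.commute)

lemma sum_mat_id_left:
  assumes "finite V" "u \<in> V"
  shows "(\<Sum>w\<in>V. mat_id u w * x w) = x u"
proof -
  have "mat_id u w * x w = (if u = w then x w else 0)" for w
    by (simp add: mat_id_def)
  then show ?thesis
    using assms by simp
qed

lemma sum_mat_id_right:
  assumes "finite V" "a \<in> V"
  shows "(\<Sum>w\<in>V. f w * mat_id w a) = f a"
proof -
  have "f w * mat_id w a = (if a = w then f w else 0)" for w
    by (simp add: mat_id_def)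
  then show ?thesis
    using assms by simp
qed

lemma mat_pow_eigenvector:
  assumes "finite V" "u \<in> V"
    and eigen: "\<And>v. v \<in> V \<Longrightarrow> (\<Sum>w\<in>V. A v w * x w) = \<mu> * x v"
  shows "(\<Sum>w\<in>V. mat_pow V A k u w * x w) = \<mu> ^ k * x u"
  using \<open>u \<in> V\<close>
proof (induction k arbitrary: u)
  case 0
  then show ?case
    using \<open>finite V\<close> by (simp add: sum_mat_id_left)
next
  case (Suc k)
  have "(\<Sum>w\<in>V. mat_pow V A (Suc k) u w * x w) = (\<Sum>v\<in>V. A u v * (\<Sum>w\<in>V. mat_pow V A k v w * x w))"
    unfolding mat_pow.simps mat_mult_def sum_distrib_left sum_distrib_right mult.assoc
    by (rule sum.swap)
  also have "\<dots> = \<mu> ^ k * (\<Sum>v\<in>V. A u v * x v)"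
    by (simp add: Suc.IH sum_distrib_left mult.left_commute cong: sum.cong)
  also have "\<dots> = \<mu> ^ Suc k * x u"
    using eigen[OF Suc.prems] by simp
  finally show ?case .
qed

lemma mat_exp_column_eigen_expansion:
  assumes "finite V" "finite I" "a \<in> V" "u \<in> V"
    and eigen: "\<And>i v. i \<in> I \<Longrightarrow> v \<in> V \<Longrightarrow> (\<Sum>w\<in>V. A v w * x i w) = \<mu> i * x i v"
    and expansion: "\<And>w. w \<in> V \<Longrightarrow> mat_id w a = (\<Sum>i\<in>I. c i * x i w)"
  shows "mat_exp V A u a = (\<Sum>i\<in>I. c i * exp (\<mu> i) * x i u)"
proof -
  have pow: "mat_pow V A k u a = (\<Sum>i\<in>I. c i * x i u * \<mu> i ^ k)" for k
  proof -
    have "mat_pow V A k u a = (\<Sum>w\<in>V. mat_pow V A k u w * mat_id w a)"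
      using assms(1,3) by (simp add: sum_mat_id_right)
    also have "\<dots> = (\<Sum>i\<in>I. c i * (\<Sum>w\<in>V. mat_pow V A k u w * x i w))"
      unfolding sum_distrib_left mult.left_commute[of "c _"]
      by (simp add: expansion sum_distrib_left sum.swap[of _ V I])
    also have "\<dots> = (\<Sum>i\<in>I. c i * x i u * \<mu> i ^ k)"
      using mat_pow_eigenvector[OF assms(1,4) eigen] by (simp add: mult_ac cong: sum.cong)
    finally show ?thesis .
  qed
  have "(\<lambda>k. \<Sum>i\<in>I. c i * x i u * (\<mu> i ^ k / of_nat (fact k)))
      sums (\<Sum>i\<in>I. c i * x i u * exp (\<mu> i))"
    by (intro sums_sum sums_mult exp_series_sums)
  then have "(\<lambda>k. mat_pow V A k u a / of_nat (fact k)) sums (\<Sum>i\<in>I. c i * exp (\<mu> i) * x i u)"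
    by (simp add: pow sum_divide_distrib mult.commute mult.left_commute)
  then show ?thesis
    unfolding mat_exp_def by (rule sums_unique[symmetric])
qed

lemma sum_laplacian:
  assumes "finite V" "u \<in> V"
  shows "(\<Sum>w\<in>V. laplacian V E u w * x w) = of_nat (degree V E u) * x u - (\<Sum>w\<in>{w\<in>V. E u w}. x w)"
proof -
  have "(\<Sum>w\<in>V. laplacian V E u w * x w) =
      (\<Sum>w\<in>V. if u = w then of_nat (degree V E u) * x w else 0) - (\<Sum>w\<in>V. if E u w then x w else 0)"
    unfolding laplacian_def sum_subtractf[symmetric] by (rule sum.cong) (auto simp: algebra_simps)
  then show ?thesis
    using assms by (simp add: sum.inter_filter)
qed

lemma blowup2_neighbours:
  "{w \<in> blowup2_verts V. blowup2_adj E (l, a) w} = {0, 1} \<times> {b \<in> V. E a b}"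
  by (auto simp: blowup2_verts_def blowup2_adj_def)

lemma degree_blowup2:
  assumes "finite V"
  shows "degree (blowup2_verts V) (blowup2_adj E) (l, a) = 2 * degree V E a"
  using assms by (simp add: degree_def blowup2_neighbours card_cartesian_product)

abbreviation "blown_star_verts n \<equiv> blowup2_verts (star_verts n)"
abbreviation "blown_star_adj n \<equiv> blowup2_adj (star_adj n)"
abbreviation "blown_star_laplacian n \<equiv> laplacian (blown_star_verts n) (blown_star_adj n)"

lemma star_neighbours_centre: "{b \<in> star_verts n. star_adj n 0 b} = {1..n}"
  by (auto simp: star_verts_def star_adj_def)

lemma star_neighbours_leaf:
  assumes "1 \<le> j" "j \<le> n"
  shows "{b \<in> star_verts n. star_adj n j b} = {0}"
  using assms by (auto simp: star_verts_def star_adj_def)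

definition star_vec :: "complex \<Rightarrow> complex \<Rightarrow> complex \<Rightarrow> nat \<times> nat \<Rightarrow> complex" where
  "star_vec a b c u = (if u = (0, 0) then a else if u = (1, 0) then b else c)"

lemma laplacian_blown_star_vec:
  assumes "u \<in> blown_star_verts n"
  shows "(\<Sum>w\<in>blown_star_verts n. blown_star_laplacian n u w * star_vec a b c w)
       = star_vec (2 * of_nat n * (a - c)) (2 * of_nat n * (b - c)) (2 * c - a - b) u"
proof -
  let ?V = "star_verts n"
  have fin: "finite (blown_star_verts n)" "finite ?V"
    by (simp_all add: blowup2_verts_def star_verts_def)
  obtain l j where u: "u = (l, j)" "l = 0 \<or> l = 1" "j \<le> n"
    using assms by (auto simp: blowup2_verts_def star_verts_def)
  have lap: "(\<Sum>w\<in>blown_star_verts n. blown_star_laplacian n u w * star_vec a b c w)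
      = of_nat (2 * degree ?V (star_adj n) j) * star_vec a b c u
        - (\<Sum>w\<in>{0, 1} \<times> {b\<in>?V. star_adj n j b}. star_vec a b c w)"
    using sum_laplacian[OF fin(1) assms] u(1) by (simp add: degree_blowup2[OF fin(2)] blowup2_neighbours)
  show ?thesis
  proof (cases "j = 0")
    case True
    have "(\<Sum>w\<in>{0::nat, 1} \<times> {1..n}. star_vec a b c w) = (\<Sum>w\<in>{0::nat, 1} \<times> {1..n}. c)"
      by (rule sum.cong) (auto simp: star_vec_def)
    then show ?thesis
      using u True unfolding lap
      by (auto simp: star_neighbours_centre degree_def star_vec_def algebra_simps)
  next
    case False
    then show ?thesis
      using u unfolding lap
      by (auto simp: star_neighbours_leaf degree_def star_vec_def algebra_simps)
  qed
qed

lemma blown_star_eigenvectors: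
  assumes "u \<in> blown_star_verts n"
  shows "(\<Sum>w\<in>blown_star_verts n. blown_star_laplacian n u w * star_vec 1 (-1) 0 w)
           = 2 * of_nat n * star_vec 1 (-1) 0 u"
    and "(\<Sum>w\<in>blown_star_verts n. blown_star_laplacian n u w * star_vec 1 1 1 w) = 0"
    and "(\<Sum>w\<in>blown_star_verts n. blown_star_laplacian n u w * star_vec (of_nat n) (of_nat n) (-1) w)
           = (2 * of_nat n + 2) * star_vec (of_nat n) (of_nat n) (-1) u"
  unfolding laplacian_blown_star_vec[OF assms] by (simp_all add: star_vec_def algebra_simps)

lemma mat_exp_blown_star_column:
  fixes z :: complex
  assumes "u \<in> blown_star_verts n"
  defines "N \<equiv> of_nat n :: complex"
  shows "mat_exp (blown_star_verts n) (\<lambda>x y. z * blown_star_laplacian n x y) u (0, 0)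
       = star_vec (exp (2 * N * z) / 2 + (1 + N * exp ((2 * N + 2) * z)) / (2 * (N + 1)))
                  (- exp (2 * N * z) / 2 + (1 + N * exp ((2 * N + 2) * z)) / (2 * (N + 1)))
                  ((1 - exp ((2 * N + 2) * z)) / (2 * (N + 1))) u"
proof -
  define x :: "nat \<Rightarrow> nat \<times> nat \<Rightarrow> complex" where
    "x i = (if i = 0 then star_vec 1 (-1) 0 else if i = 1 then star_vec 1 1 1 else star_vec N N (-1))" for i
  define \<mu> :: "nat \<Rightarrow> complex" where
    "\<mu> i = (if i = 0 then 2 * N else if i = 1 then 0 else 2 * N + 2) * z" for i
  define h where "h = 1 / (2 * (N + 1))"
  define c :: "nat \<Rightarrow> complex" where
    "c i = (if i = 0 then 1 / 2 else h)" for i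
  have "h + h * N = (N + 1) / (2 * (N + 1))"
    unfolding h_def by (simp add: algebra_simps add_divide_distrib)
  also have "\<dots> = 1 / 2"
    unfolding N_def by (rule nonzero_divide_mult_cancel_right) (metis of_nat_Suc of_nat_neq_0 add.commute)
  finally have h_centre: "h + h * N = 1 / 2" .
  have fin: "finite (blown_star_verts n)"
    by (simp add: blowup2_verts_def star_verts_def)
  have eigen: "(\<Sum>w\<in>blown_star_verts n. z * blown_star_laplacian n v w * x i w) = \<mu> i * x i v"
    if "i \<in> {0, 1, 2}" "v \<in> blown_star_verts n" for i v
    using that blown_star_eigenvectors[OF that(2)]
    by (auto simp: x_def \<mu>_def N_def mult.assoc sum_distrib_left[symmetric])
  have expansion: "mat_id w (0, 0) = (\<Sum>i\<in>{0, 1, 2}. c i * x i w)" for w :: "nat \<times> nat"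
    by (simp add: mat_id_def c_def x_def star_vec_def add.assoc h_centre)
  have "(0, 0) \<in> blown_star_verts n"
    by (simp add: blowup2_verts_def star_verts_def)
  from mat_exp_column_eigen_expansion[OF fin _ this assms(1) eigen expansion]
  show ?thesis
    by (simp add: c_def x_def \<mu>_def h_def star_vec_def add_divide_distrib diff_divide_distrib algebra_simps)
qed

lemma star_vec_concentrated_iff:
  assumes "n \<ge> 1"
  shows "(\<exists>\<gamma>. \<forall>u\<in>blown_star_verts n. star_vec a b c u = \<gamma> * (if u = (1, 0) then 1 else 0))
         \<longleftrightarrow> a = 0 \<and> c = 0" (is "(\<exists>\<gamma>. ?P \<gamma>) \<longleftrightarrow> _")
proof
  assume "\<exists>\<gamma>. ?P \<gamma>"
  then obtain \<gamma> where "?P \<gamma>" ..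
  moreover have "(0, 0) \<in> blown_star_verts n" "(0, 1) \<in> blown_star_verts n"
    using assms by (auto simp: blowup2_verts_def star_verts_def)
  ultimately show "a = 0 \<and> c = 0"
    by (force simp: star_vec_def)
next
  assume "a = 0 \<and> c = 0"
  then have "?P b"
    by (simp add: star_vec_def)
  then show "\<exists>\<gamma>. ?P \<gamma>" ..
qed

lemma star_column_vanishing_iff:
  fixes N e1 e2 :: complex
  assumes "N + 1 \<noteq> 0"
  shows "(e1 / 2 + (1 + N * e2) / (2 * (N + 1)) = 0 \<and> (1 - e2) / (2 * (N + 1)) = 0)
         \<longleftrightarrow> e1 = -1 \<and> e2 = 1"
proof -
  have "(1 - e2) / (2 * (N + 1)) = 0 \<longleftrightarrow> e2 = 1"
    using assms by (simp only: divide_eq_0_iff mult_eq_0_iff zero_neq_numeral right_minus_eq) auto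
  moreover have half: "(1 + N * 1) / (2 * (N + 1)) = 1 / 2"
    unfolding mult_1_right add.commute[of 1 N] using assms by (rule nonzero_divide_mult_cancel_right)
  have "e1 / 2 + (1 + N * 1) / (2 * (N + 1)) = 0 \<longleftrightarrow> e1 = -1"
    unfolding half by (auto simp: field_simps add_eq_0_iff)
  ultimately show ?thesis
    by metis
qed

lemma lap_pst_blown_star_iff:
  assumes "n \<ge> 1"
  shows "lap_pst (blown_star_verts n) (blown_star_adj n) (0, 0) (1, 0)
         \<longleftrightarrow> (\<exists>\<tau>>0. cis (2 * real n * \<tau>) = -1 \<and> cis ((2 * real n + 2) * \<tau>) = 1)"
proof -
  have cis: "exp (2 * of_nat n * (\<i> * of_real \<tau>)) = cis (2 * real n * \<tau>)"
            "exp ((2 * of_nat n + 2) * (\<i> * of_real \<tau>)) = cis ((2 * real n + 2) * \<tau>)" for \<tau>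
    by (simp_all add: cis_conv_exp algebra_simps)
  have "(\<exists>\<gamma>. \<forall>u\<in>blown_star_verts n.
            mat_exp (blown_star_verts n) (\<lambda>x y. \<i> * of_real \<tau> * blown_star_laplacian n x y) u (0, 0)
            = \<gamma> * (if u = (1, 0) then 1 else 0))
        \<longleftrightarrow> cis (2 * real n * \<tau>) = -1 \<and> cis ((2 * real n + 2) * \<tau>) = 1" (is "?pst \<longleftrightarrow> _") for \<tau>
  proof -
    define e1 where "e1 = cis (2 * real n * \<tau>)"
    define e2 where "e2 = cis ((2 * real n + 2) * \<tau>)"
    let ?a = "e1 / 2 + (1 + of_nat n * e2) / (2 * (of_nat n + 1))"
    let ?b = "- e1 / 2 + (1 + of_nat n * e2) / (2 * (of_nat n + 1))"
    let ?c = "(1 - e2) / (2 * (of_nat n + 1))"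
    have column: "mat_exp (blown_star_verts n) (\<lambda>x y. \<i> * of_real \<tau> * blown_star_laplacian n x y) u (0, 0)
        = star_vec ?a ?b ?c u" if "u \<in> blown_star_verts n" for u
      using mat_exp_blown_star_column[OF that, of "\<i> * of_real \<tau>"] by (simp add: e1_def e2_def cis)
    have "?pst \<longleftrightarrow> (\<exists>\<gamma>. \<forall>u\<in>blown_star_verts n. star_vec ?a ?b ?c u = \<gamma> * (if u = (1, 0) then 1 else 0))"
      by (intro ex_cong1 ball_cong refl) (simp only: column)
    also have "\<dots> \<longleftrightarrow> ?a = 0 \<and> ?c = 0"
      by (rule star_vec_concentrated_iff[OF assms])
    also have "\<dots> \<longleftrightarrow> e1 = -1 \<and> e2 = 1"
      by (rule star_column_vanishing_iff) (metis of_nat_Suc of_nat_neq_0 add.commute)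
    finally show ?thesis
      unfolding e1_def e2_def .
  qed
  then show ?thesis
    unfolding lap_pst_def by simp
qed

lemma cis_phases_iff_odd:
  "(\<exists>\<tau>>0. cis (2 * real n * \<tau>) = -1 \<and> cis ((2 * real n + 2) * \<tau>) = 1) \<longleftrightarrow> odd n"
proof
  assume "\<exists>\<tau>>0. cis (2 * real n * \<tau>) = -1 \<and> cis ((2 * real n + 2) * \<tau>) = 1"
  then obtain \<tau> where "cis (2 * real n * \<tau>) = -1" "cis ((2 * real n + 2) * \<tau>) = 1"
    by blast
  then have "cos (2 * real n * \<tau> + pi) = 1" "cos ((2 * real n + 2) * \<tau>) = 1"
    by (metis cis.sel(1) cos_periodic_pi minus_equation_iff one_complex.sel(1) uminus_complex.sel(1))+
  then obtain m k :: int where m: "2 * real n * \<tau> + pi = of_int m * 2 * pi"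
    and k: "(2 * real n + 2) * \<tau> = of_int k * 2 * pi"
    unfolding cos_one_2pi_int by blast
  have m': "2 * real n * \<tau> = of_int m * 2 * pi - pi"
    using m by linarith
  have "real_of_int (2 * int n * k) * pi = real n * ((2 * real n + 2) * \<tau>)"
    unfolding k by simp
  also have "\<dots> = (real n + 1) * (2 * real n * \<tau>)"
    by (simp add: algebra_simps)
  also have "\<dots> = real_of_int ((int n + 1) * (2 * m - 1)) * pi"
    unfolding m' by (simp add: algebra_simps)
  finally have "2 * int n * k = (int n + 1) * (2 * m - 1)"
    by (simp only: mult_cancel_right pi_neq_zero of_int_eq_iff simp_thms)
  then have "even ((int n + 1) * (2 * m - 1))"
    by (metis dvd_mult2 dvd_triv_left)
  then show "odd n"
    by simp
next
  assume "odd n"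
  have "cis (2 * real n * (pi / 2)) = cis pi ^ n" "cis ((2 * real n + 2) * (pi / 2)) = cis pi ^ Suc n"
    unfolding DeMoivre by (simp_all add: algebra_simps)
  with \<open>odd n\<close> have "cis (2 * real n * (pi / 2)) = -1" "cis ((2 * real n + 2) * (pi / 2)) = 1"
    by simp_all
  then show "\<exists>\<tau>>0. cis (2 * real n * \<tau>) = -1 \<and> cis ((2 * real n + 2) * \<tau>) = 1"
    by (intro exI[of _ "pi / 2"]) simp
qed

theorem corollary11:
  fixes n :: nat
  assumes "n \<ge> 1"
  shows "lap_pst (blowup2_verts (star_verts n)) (blowup2_adj (star_adj n)) (0, 0) (1, 0)
         \<longleftrightarrow> odd n"
  using lap_pst_blown_star_iff[OF assms] cis_phases_iff_odd by simp

end
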